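(* Let $G$ be a non-trivial finite group and let $P$ be a finite $G$-poset. Then $$\chi\left(\widetilde{C}_P\right)\leq \dim(P)+1.$$
   Context: A $G$-poset is a partially ordered set $(P,\preceq)$ together with an action of the group $G$ on $P$ that preserves the order: $x\preceq y \Rightarrow g\cdot x\preceq g\cdot y$. For $x\in P$ let $[x]=\{g\cdot x: g\in G\}$ be its orbit. The strong compatibility graph $\widetilde{C}_P$ is the simple graph with vertex set $P$ in which two elements $x,y\in P$ are adjacent if there is $g\in G\setminus\{e\}$ ($e$ the identity) such that $x$ and $g\cdot y$ are comparable in $P$, and $y\notin[x]$. The dimension $\dim(P)$ is the dimension of the order complex $\Delta(P)$ (the simplicial complex whose simplices are the chains of $P$), i.e. the maximum number of elements in a chain of $P$ minus one. $\chi$ denotes the chromatic number. *)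

theory Defs
  imports "HOL-Algebra.Group_Action"
begin

definition partial_order_on_set :: "'a set \<Rightarrow> ('a \<Rightarrow> 'a \<Rightarrow> bool) \<Rightarrow> bool" where
  "partial_order_on_set P leq \<longleftrightarrow>
     (\<forall>x\<in>P. leq x x) \<and>
     (\<forall>x\<in>P. \<forall>y\<in>P. leq x y \<and> leq y x \<longrightarrow> x = y) \<and>
     (\<forall>x\<in>P. \<forall>y\<in>P. \<forall>z\<in>P. leq x y \<and> leq y z \<longrightarrow> leq x z)"

definition G_poset :: "('g, 'm) monoid_scheme \<Rightarrow> 'a set \<Rightarrow> ('a \<Rightarrow> 'a \<Rightarrow> bool) \<Rightarrow> ('g \<Rightarrow> 'a \<Rightarrow> 'a) \<Rightarrow> bool" where
  "G_poset G P leq phi \<longleftrightarrow>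
     group_action G P phi \<and> partial_order_on_set P leq \<and>
     (\<forall>g\<in>carrier G. \<forall>x\<in>P. \<forall>y\<in>P. leq x y \<longrightarrow> leq (phi g x) (phi g y))"

definition comparable :: "('a \<Rightarrow> 'a \<Rightarrow> bool) \<Rightarrow> 'a \<Rightarrow> 'a \<Rightarrow> bool" where
  "comparable leq x y \<longleftrightarrow> leq x y \<or> leq y x"

definition strong_compat_adj :: "('g, 'm) monoid_scheme \<Rightarrow> 'a set \<Rightarrow> ('a \<Rightarrow> 'a \<Rightarrow> bool) \<Rightarrow> ('g \<Rightarrow> 'a \<Rightarrow> 'a) \<Rightarrow> 'a \<Rightarrow> 'a \<Rightarrow> bool" where
  "strong_compat_adj G P leq phi x y \<longleftrightarrow>
     x \<in> P \<and> y \<in> P \<and> x \<noteq> y \<and>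
     (\<exists>g\<in>carrier G - {\<one>\<^bsub>G\<^esub>}. comparable leq x (phi g y)) \<and>
     y \<notin> orbit G phi x"

definition chromatic_number :: "'a set \<Rightarrow> ('a \<Rightarrow> 'a \<Rightarrow> bool) \<Rightarrow> nat" where
  "chromatic_number V E = (LEAST k. \<exists>c :: 'a \<Rightarrow> nat.
      (\<forall>x\<in>V. c x < k) \<and> (\<forall>x\<in>V. \<forall>y\<in>V. E x y \<longrightarrow> c x \<noteq> c y))"

definition is_chain :: "'a set \<Rightarrow> ('a \<Rightarrow> 'a \<Rightarrow> bool) \<Rightarrow> 'a set \<Rightarrow> bool" where
  "is_chain P leq C \<longleftrightarrow> C \<subseteq> P \<and> (\<forall>x\<in>C. \<forall>y\<in>C. comparable leq x y)"

text \<open>Dimension of the order complex: maximal number of elements of a chain minus one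
  (for finite P; equals -1 for empty P).\<close>
definition poset_dim :: "'a set \<Rightarrow> ('a \<Rightarrow> 'a \<Rightarrow> bool) \<Rightarrow> int" where
  "poset_dim P leq = int (Max {card C | C. is_chain P leq C}) - 1"

end

theory Submission
  imports Defs
begin

text \<open>Colour each element by its height, the largest size of a chain ending in it. Heights lie
  between 1 and the largest chain size, increase strictly along the order and are invariant under
  the order-preserving action. If x and y are adjacent then x is comparable to some g y different
  from x, so x and y get different heights.\<close>

lemma chromatic_number_le:
  assumes "\<forall>x\<in>V. c x < k" and "\<forall>x\<in>V. \<forall>y\<in>V. E x y \<longrightarrow> c x \<noteq> c y"
  shows "chromatic_number V E \<le> k"
  unfolding chromatic_number_def using assms by (intro Least_le) blast

locale finite_poset =
  fixes P :: "'a set" and leq :: "'a \<Rightarrow> 'a \<Rightarrow> bool"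
  assumes finite: "finite P" and partial_order: "partial_order_on_set P leq"
begin

lemma leq_refl: "x \<in> P \<Longrightarrow> leq x x"
  using partial_order unfolding partial_order_on_set_def by blast

lemma leq_antisym: "\<lbrakk>x \<in> P; y \<in> P; leq x y; leq y x\<rbrakk> \<Longrightarrow> x = y"
  using partial_order unfolding partial_order_on_set_def by blast

lemma leq_trans: "\<lbrakk>x \<in> P; y \<in> P; z \<in> P; leq x y; leq y z\<rbrakk> \<Longrightarrow> leq x z"
  using partial_order unfolding partial_order_on_set_def by blast

lemma is_chain_singleton: "x \<in> P \<Longrightarrow> is_chain P leq {x}"
  unfolding is_chain_def comparable_def using leq_refl by blast

lemma is_chain_insert_top:
  assumes "is_chain P leq C" and "y \<in> P" and "\<forall>z\<in>C. leq z y"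
  shows "is_chain P leq (insert y C)"
  using assms leq_refl unfolding is_chain_def comparable_def by blast

lemma is_chain_image:
  assumes "is_chain P leq C" and "f ` P \<subseteq> P" and "\<forall>x\<in>P. \<forall>y\<in>P. leq x y \<longrightarrow> leq (f x) (f y)"
  shows "is_chain P leq (f ` C)"
  using assms unfolding is_chain_def comparable_def by (smt (verit) image_iff subset_iff)

lemma finite_card_chains:
  assumes "S \<subseteq> Collect (is_chain P leq)"
  shows "finite (card ` S)"
proof -
  have "S \<subseteq> Pow P"
    using assms unfolding is_chain_def by auto
  then show ?thesis
    using finite by (meson finite_Pow_iff finite_imageI finite_subset)
qed

definition height :: "'a \<Rightarrow> nat" where
  "height x = Max (card ` {C. is_chain P leq C \<and> (\<forall>z\<in>C. leq z x)})"

lemma card_le_height: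
  assumes "is_chain P leq C" and "\<forall>z\<in>C. leq z x"
  shows "card C \<le> height x"
  unfolding height_def using assms by (intro Max_ge finite_card_chains) auto

lemma height_attained:
  assumes "x \<in> P"
  obtains C where "is_chain P leq C" "\<forall>z\<in>C. leq z x" "card C = height x"
proof -
  have "{x} \<in> {C. is_chain P leq C \<and> (\<forall>z\<in>C. leq z x)}"
    using assms is_chain_singleton leq_refl by blast
  then have "height x \<in> card ` {C. is_chain P leq C \<and> (\<forall>z\<in>C. leq z x)}"
    unfolding height_def by (intro Max_in finite_card_chains) auto
  then obtain C where "is_chain P leq C" "\<forall>z\<in>C. leq z x" "card C = height x"
    by auto
  then show thesis
    using that by blast
qed

lemma height_pos: "x \<in> P \<Longrightarrow> 0 < height x"
  using card_le_height[OF is_chain_singleton, of x x] leq_refl by fastforce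

lemma height_le_max_card_chain:
  assumes "x \<in> P"
  shows "height x \<le> Max {card C | C. is_chain P leq C}"
proof -
  obtain C where "is_chain P leq C" "card C = height x"
    using height_attained[OF assms] by metis
  moreover have "{card C | C. is_chain P leq C} = card ` Collect (is_chain P leq)"
    by blast
  ultimately show ?thesis
    using finite_card_chains[of "Collect (is_chain P leq)"] by (metis Max_ge image_eqI mem_Collect_eq order_refl)
qed

lemma height_strict_mono:
  assumes "x \<in> P" "y \<in> P" "leq x y" "x \<noteq> y"
  shows "height x < height y"
proof -
  obtain C where C: "is_chain P leq C" "\<forall>z\<in>C. leq z x" "card C = height x"
    using height_attained[OF assms(1)] by metis
  have "C \<subseteq> P"
    using C(1) unfolding is_chain_def by blast
  then have below_y: "\<forall>z\<in>C. leq z y"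
    using C(2) assms leq_trans by blast
  have "y \<notin> C"
    using C(2) assms leq_antisym by blast
  then have "card (insert y C) = Suc (height x)"
    using C(3) \<open>C \<subseteq> P\<close> finite finite_subset by fastforce
  moreover have "card (insert y C) \<le> height y"
    using card_le_height is_chain_insert_top[OF C(1) assms(2) below_y] below_y assms(2) leq_refl
    by blast
  ultimately show ?thesis
    by simp
qed

lemma height_le_height_image:
  assumes "x \<in> P" and "f ` P \<subseteq> P" and "inj_on f P"
    and mono: "\<forall>x\<in>P. \<forall>y\<in>P. leq x y \<longrightarrow> leq (f x) (f y)"
  shows "height x \<le> height (f x)"
proof -
  obtain C where C: "is_chain P leq C" "\<forall>z\<in>C. leq z x" "card C = height x"
    using height_attained[OF assms(1)] by metis
  have "C \<subseteq> P"
    using C(1) unfolding is_chain_def by blast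
  then have "card (f ` C) = height x"
    using C(3) assms(3) by (metis card_image inj_on_subset)
  moreover have "\<forall>z\<in>f ` C. leq z (f x)"
    using C(2) \<open>C \<subseteq> P\<close> assms(1) mono by blast
  ultimately show ?thesis
    using card_le_height is_chain_image[OF C(1) assms(2) mono] by metis
qed

end

locale finite_G_poset =
  fixes G :: "('g, 'm) monoid_scheme" and P :: "'a set"
    and leq :: "'a \<Rightarrow> 'a \<Rightarrow> bool" and phi :: "'g \<Rightarrow> 'a \<Rightarrow> 'a"
  assumes finite_P: "finite P" and G_poset: "G_poset G P leq phi"

sublocale finite_G_poset \<subseteq> finite_poset P leq
  using finite_P G_poset unfolding G_poset_def by unfold_locales auto

sublocale finite_G_poset \<subseteq> group_action G P phi
  using G_poset unfolding G_poset_def by blast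

context finite_G_poset
begin

lemma height_action_le:
  assumes "g \<in> carrier G" and "x \<in> P"
  shows "height x \<le> height (phi g x)"
  using G_poset assms surj_prop inj_prop unfolding G_poset_def
  by (intro height_le_height_image) auto

lemma height_action:
  assumes "g \<in> carrier G" and "x \<in> P"
  shows "height (phi g x) = height x"
proof -
  interpret group G
    using group_hom group_hom.axioms(1) by blast
  have "height (phi (inv\<^bsub>G\<^esub> g) (phi g x)) = height x"
    using orbit_sym_aux assms by simp
  then show ?thesis
    using height_action_le assms element_image inv_closed by (metis le_antisym)
qed

lemma strong_compat_adj_height_neq:
  assumes "strong_compat_adj G P leq phi x y"
  shows "height x \<noteq> height y"
proof -
  obtain g where g: "g \<in> carrier G" and comp: "comparable leq x (phi g y)"
    and x: "x \<in> P" and y: "y \<in> P" and not_orbit: "y \<notin> orbit G phi x"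
    using assms unfolding strong_compat_adj_def by blast
  have gy: "phi g y \<in> P"
    using element_image g y by blast
  have "phi g y \<in> orbit G phi y"
    using g unfolding orbit_def by blast
  then have "x \<noteq> phi g y"
    using orbit_sym x y not_orbit by blast
  then have "height x \<noteq> height (phi g y)"
    using comp height_strict_mono x gy unfolding comparable_def by (metis less_irrefl_nat)
  then show ?thesis
    using height_action g y by simp
qed

lemma chromatic_number_le_max_card_chain:
  "chromatic_number P (strong_compat_adj G P leq phi) \<le> Max {card C | C. is_chain P leq C}"
proof (rule chromatic_number_le[where c = "\<lambda>x. height x - 1"])
  show "\<forall>x\<in>P. height x - 1 < Max {card C | C. is_chain P leq C}"
    using height_pos height_le_max_card_chain by fastforce
  show "\<forall>x\<in>P. \<forall>y\<in>P. strong_compat_adj G P leq phi x y \<longrightarrow> height x - 1 \<noteq> height y - 1"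
  proof (intro ballI impI)
    fix x y
    assume "x \<in> P" "y \<in> P" "strong_compat_adj G P leq phi x y"
    then show "height x - 1 \<noteq> height y - 1"
      using height_pos[of x] height_pos[of y] strong_compat_adj_height_neq[of x y] by linarith
  qed
qed

end

theorem lemma7:
  fixes G :: "('g, 'm) monoid_scheme"
    and P :: "'a set" and leq :: "'a \<Rightarrow> 'a \<Rightarrow> bool" and phi :: "'g \<Rightarrow> 'a \<Rightarrow> 'a"
  assumes "group G"
    and "finite (carrier G)"
    and "carrier G \<noteq> {\<one>\<^bsub>G\<^esub>}"
    and "finite P"
    and "G_poset G P leq phi"
  shows "int (chromatic_number P (strong_compat_adj G P leq phi)) \<le> poset_dim P leq + 1"
proof -
  interpret finite_G_poset G P leq phi
    using assms(4,5) by unfold_locales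
  show ?thesis
    using chromatic_number_le_max_card_chain unfolding poset_dim_def by simp
qed

end
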